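(* Let $G$ be a simple graph with $m$ edges and girth $g(G)\ge 5$. Then the number $p(G;4)$ of $4$-matchings of $G$ equals $$\frac{1}{24}m^4+\frac14 m^3+\frac{19}{24}m^2-\frac{11}{4}m+\frac18 M_1(G)^2+\frac13 mF(G)-\frac14 m^2M_1(G)+mM_2(G)+\frac14 M_1^4(G)-2M_2(G)-\frac54 mM_1(G)+\frac72 M_1(G)-EM_2(G)-\frac32 F(G),$$ where $M_1(G)^2$ is the square of the number $M_1(G)$.
   Context: All graphs are finite, simple and undirected. A $k$-matching is a set of $k$ pairwise vertex-disjoint edges; $p(G;k)$ is the number of $k$-matchings in $G$. $d_G(v)$ is the degree of $v$; the girth is the length of a shortest cycle (infinite if acyclic). $M_1^\alpha(G)=\sum_v d_G(v)^\alpha$ (exponent on degrees), $M_1=M_1^2$, $F=M_1^3$, $M_1^4(G)=\sum_v d_G(v)^4$; $M_2(G)=\sum_{uv\in E(G)}d_G(u)d_G(v)$. For an edge $e=uv$, $d_G(e)=d_G(u)+d_G(v)-2$; $EM_2(G)=\sum_{e\sim f}d_G(e)d_G(f)$, the sum over unordered pairs of distinct edges sharing a vertex. *)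

theory Defs
  imports Complex_Main "HOL-Library.Extended_Nat"
begin

definition simple_graph :: "'a set \<Rightarrow> 'a set set \<Rightarrow> bool" where
  "simple_graph V E \<longleftrightarrow> finite V \<and> (\<forall>e\<in>E. \<exists>u v. e = {u, v} \<and> u \<noteq> v \<and> u \<in> V \<and> v \<in> V)"

definition degree :: "'a set set \<Rightarrow> 'a \<Rightarrow> nat" where
  "degree E v = card {e \<in> E. v \<in> e}"

definition matchings :: "'a set set \<Rightarrow> nat \<Rightarrow> 'a set set set" where
  "matchings E k = {M. M \<subseteq> E \<and> card M = k \<and> pairwise disjnt M}"

definition num_matchings :: "'a set set \<Rightarrow> nat \<Rightarrow> nat" where
  "num_matchings E k = card (matchings E k)"

definition is_cycle :: "'a set set \<Rightarrow> 'a list \<Rightarrow> bool" where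
  "is_cycle E cs \<longleftrightarrow> length cs \<ge> 3 \<and> distinct cs \<and>
     (\<forall>i < length cs. {cs ! i, cs ! ((i + 1) mod length cs)} \<in> E)"

definition girth :: "'a set set \<Rightarrow> enat" where
  "girth E = (INF cs \<in> {cs. is_cycle E cs}. enat (length cs))"

text \<open>Generalised first Zagreb index M_1^alpha(G) = sum of d(v)^alpha.\<close>
definition M1_pow :: "'a set \<Rightarrow> 'a set set \<Rightarrow> nat \<Rightarrow> real" where
  "M1_pow V E a = (\<Sum>v\<in>V. real (degree E v) ^ a)"

definition M2 :: "'a set set \<Rightarrow> real" where
  "M2 E = (\<Sum>e\<in>E. \<Prod>v\<in>e. real (degree E v))"

definition edge_degree :: "'a set set \<Rightarrow> 'a set \<Rightarrow> real" where
  "edge_degree E e = (\<Sum>v\<in>e. real (degree E v)) - 2"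

definition EM2 :: "'a set set \<Rightarrow> real" where
  "EM2 E = (\<Sum>P\<in>{{e, f} | e f. e \<in> E \<and> f \<in> E \<and> e \<noteq> f \<and> e \<inter> f \<noteq> {}}.
              \<Prod>x\<in>P. edge_degree E x)"

end

theory Submission
  imports Defs
begin

(* Counting, for every edge, the matchings containing it gives
   24 p(G;4) = sum over ordered triples (a, b, c) of pairwise disjoint edges of the number of
   edges disjoint from a, b and c.  No edge meets three pairwise disjoint edges, so by
   inclusion-exclusion that number is m + 3 - s(a) - s(b) - s(c) + l(a,b) + l(a,c) + l(b,c),
   where s(e) = d(u) + d(v) for e = uv and l counts the edges linking two edges; by symmetry the
   triple sum collapses to a sum over ordered pairs of disjoint edges.  Girth at least 5 excludes
   triangles and 4-cycles, so l(a,b) is 0 or 1, and a linked pair of disjoint edges is the same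
   as a path of length 3 read from its middle edge.  Hence every remaining sum over pairs of
   disjoint edges is a sum over edges and vertices, which double counting expresses through the
   degree invariants. *)

lemma finite_matchings: "finite E \<Longrightarrow> finite (matchings E k)"
  unfolding matchings_def by (rule finite_subset[of _ "Pow E"]) auto

lemma matchings_0: "finite E \<Longrightarrow> matchings E 0 = {{}}"
  by (auto simp: matchings_def card_eq_0_iff dest: finite_subset)

lemma card_matchings_Suc:
  assumes fin: "finite E" and ne: "{} \<notin> E"
  shows "Suc k * card (matchings E (Suc k)) = (\<Sum>e\<in>E. card (matchings {f\<in>E. disjnt e f} k))"
proof -
  let ?M = "matchings E (Suc k)"
  have insert_bij: "bij_betw (insert e) (matchings {f\<in>E. disjnt e f} k) {M\<in>?M. e \<in> M}"
    if e: "e \<in> E" for e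
  proof (rule bij_betw_byWitness[where f' = "\<lambda>M. M - {e}"])
    have e_notin: "e \<notin> N" if "N \<in> matchings {f\<in>E. disjnt e f} k" for N
      using that ne e by (auto simp: matchings_def disjnt_def)
    show "\<forall>N\<in>matchings {f\<in>E. disjnt e f} k. insert e N - {e} = N"
      using e_notin by auto
    show "\<forall>M\<in>{M\<in>?M. e \<in> M}. insert e (M - {e}) = M" by auto
    show "insert e ` matchings {f\<in>E. disjnt e f} k \<subseteq> {M\<in>?M. e \<in> M}"
    proof (rule image_subsetI)
      fix N assume N: "N \<in> matchings {f\<in>E. disjnt e f} k"
      have "finite N" using N fin by (auto simp: matchings_def dest: finite_subset)
      then show "insert e N \<in> {M\<in>?M. e \<in> M}"
        using N e_notin[OF N] e by (auto simp: matchings_def pairwise_insert disjnt_sym)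
    qed
    show "(\<lambda>M. M - {e}) ` {M\<in>?M. e \<in> M} \<subseteq> matchings {f\<in>E. disjnt e f} k"
      by (auto simp: matchings_def pairwise_def)
  qed
  have "Suc k * card ?M = (\<Sum>M\<in>?M. card M)"
    by (simp add: matchings_def)
  also have "\<dots> = (\<Sum>M\<in>?M. \<Sum>e\<in>E. if e \<in> M then 1 else 0)"
    by (intro sum.cong refl) (auto simp: matchings_def sum.If_cases[OF fin] Int_absorb1)
  also have "\<dots> = (\<Sum>e\<in>E. card {M\<in>?M. e \<in> M})"
    by (subst sum.swap) (simp add: sum.If_cases[OF finite_matchings[OF fin]] Int_def)
  also have "\<dots> = (\<Sum>e\<in>E. card (matchings {f\<in>E. disjnt e f} k))"
    using bij_betw_same_card[OF insert_bij] by (intro sum.cong refl) simp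
  finally show ?thesis .
qed

lemma real_card_matchings_Suc:
  assumes "finite E" "{} \<notin> E"
  shows "real (Suc k) * real (card (matchings E (Suc k)))
    = (\<Sum>e\<in>E. real (card (matchings {f\<in>E. disjnt e f} k)))"
  using arg_cong[OF card_matchings_Suc[OF assms, of k], of real]
  unfolding of_nat_mult of_nat_sum .

definition disj_ind :: "'a set \<Rightarrow> 'a set \<Rightarrow> real" where
  "disj_ind a b = (if disjnt a b then 1 else 0)"

lemma disj_ind_commute: "disj_ind a b = disj_ind b a"
  by (simp add: disj_ind_def disjnt_sym)

lemma disjnt_if_disj_ind_nonzero: "disj_ind a b \<noteq> 0 \<Longrightarrow> disjnt a b"
  by (simp add: disj_ind_def split: if_splits)

lemma sum_disjnt_filter:
  "finite A \<Longrightarrow> (\<Sum>x\<in>{f\<in>A. disjnt e f}. F x) = (\<Sum>x\<in>A. disj_ind e x * F x)"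
  by (simp add: sum.inter_filter disj_ind_def) (intro sum.cong, auto)

lemma card_matchings_1:
  assumes "finite A" "{} \<notin> A"
  shows "real (card (matchings A 1)) = real (card A)"
  using real_card_matchings_Suc[OF assms, of 0] assms by (simp add: matchings_0)

lemma card_matchings_2:
  assumes "finite A" "{} \<notin> A"
  shows "2 * real (card (matchings A 2)) = (\<Sum>a\<in>A. \<Sum>b\<in>A. disj_ind a b)"
proof -
  have "\<And>e. finite {f\<in>A. disjnt e f} \<and> {} \<notin> {f\<in>A. disjnt e f}"
    using assms by simp
  then show ?thesis
    using real_card_matchings_Suc[OF assms, of 1] assms
    by (simp add: numeral_2_eq_2 card_matchings_1[unfolded One_nat_def]
        sum_disjnt_filter[where F = "\<lambda>_. 1", simplified])
qed

lemma card_matchings_3: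
  assumes "finite A" "{} \<notin> A"
  shows "6 * real (card (matchings A 3))
    = (\<Sum>a\<in>A. \<Sum>b\<in>A. \<Sum>c\<in>A. disj_ind a b * disj_ind a c * disj_ind b c)"
proof -
  have filtered: "\<And>e. finite {f\<in>A. disjnt e f} \<and> {} \<notin> {f\<in>A. disjnt e f}"
    using assms by simp
  have "6 * real (card (matchings A 3))
      = 2 * (\<Sum>a\<in>A. real (card (matchings {f\<in>A. disjnt a f} 2)))"
    using real_card_matchings_Suc[OF assms, of 2] by simp
  also have "\<dots> = (\<Sum>a\<in>A. \<Sum>b\<in>A. \<Sum>c\<in>A. disj_ind a b * disj_ind a c * disj_ind b c)"
    using assms filtered
    by (simp add: sum_distrib_left card_matchings_2 sum_disjnt_filter mult.assoc)
  finally show ?thesis .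
qed

lemma card_matchings_4:
  assumes "finite A" "{} \<notin> A"
  shows "24 * real (card (matchings A 4))
    = (\<Sum>a\<in>A. \<Sum>b\<in>A. \<Sum>c\<in>A. disj_ind a b * disj_ind a c * disj_ind b c
         * (\<Sum>d\<in>A. disj_ind a d * disj_ind b d * disj_ind c d))"
proof -
  have filtered: "\<And>e. finite {f\<in>A. disjnt e f} \<and> {} \<notin> {f\<in>A. disjnt e f}"
    using assms by simp
  have "24 * real (card (matchings A 4))
      = 6 * (\<Sum>a\<in>A. real (card (matchings {f\<in>A. disjnt a f} 3)))"
    using real_card_matchings_Suc[OF assms, of 3] by simp
  also have "\<dots> = (\<Sum>a\<in>A. \<Sum>b\<in>A. \<Sum>c\<in>A. disj_ind a b * disj_ind a c * disj_ind b c
         * (\<Sum>d\<in>A. disj_ind a d * disj_ind b d * disj_ind c d))"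
    using assms filtered
    by (simp add: sum_distrib_left card_matchings_3 sum_disjnt_filter mult_ac)
  finally show ?thesis .
qed

lemma sum_unordered_pairs:
  fixes w :: "'a \<Rightarrow> real"
  assumes fin: "finite A" and sym: "\<And>e f. R e f = R f e"
  shows "2 * (\<Sum>P\<in>{{e, f} | e f. e \<in> A \<and> f \<in> A \<and> e \<noteq> f \<and> R e f}. \<Prod>x\<in>P. w x)
    = (\<Sum>e\<in>A. \<Sum>f\<in>A. if e \<noteq> f \<and> R e f then w e * w f else 0)"
proof -
  define D where "D = {(e, f) \<in> A \<times> A. e \<noteq> f \<and> R e f}"
  define pset :: "'a \<times> 'a \<Rightarrow> 'a set" where "pset = (\<lambda>(e, f). {e, f})"
  have pairs: "{{e, f} | e f. e \<in> A \<and> f \<in> A \<and> e \<noteq> f \<and> R e f} = pset ` D"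
    by (auto simp: D_def pset_def image_def)
  have fibre: "{p\<in>D. pset p = pset (e, f)} = {(e, f), (f, e)}" if "(e, f) \<in> D" for e f
    using that sym by (auto simp: D_def pset_def doubleton_eq_iff)
  have "(\<Sum>e\<in>A. \<Sum>f\<in>A. if e \<noteq> f \<and> R e f then w e * w f else 0)
      = (\<Sum>(e, f)\<in>A \<times> A. if e \<noteq> f \<and> R e f then w e * w f else 0)"
    by (simp add: sum.cartesian_product)
  also have "\<dots> = (\<Sum>(e, f)\<in>D. w e * w f)"
    unfolding D_def using fin by (intro sum.mono_neutral_cong_right) (auto split: if_splits)
  also have "\<dots> = (\<Sum>P\<in>pset ` D. \<Sum>(e, f)\<in>{p\<in>D. pset p = P}. w e * w f)"
    by (rule sum.image_gen) (use fin in \<open>auto simp: D_def intro: finite_subset[of _ "A \<times> A"]\<close>)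
  also have "\<dots> = (\<Sum>P\<in>pset ` D. 2 * (\<Prod>x\<in>P. w x))"
  proof (rule sum.cong[OF refl])
    fix P assume "P \<in> pset ` D"
    then obtain e f where ef: "(e, f) \<in> D" "P = {e, f}" by (auto simp: pset_def)
    then have "e \<noteq> f" by (simp add: D_def)
    then show "(\<Sum>(e, f)\<in>{p\<in>D. pset p = P}. w e * w f) = 2 * (\<Prod>x\<in>P. w x)"
      using fibre[OF ef(1)] ef(2) by (simp add: pset_def mult.commute)
  qed
  finally show ?thesis by (simp add: pairs sum_distrib_left)
qed

lemma sum3_swap_symmetric:
  assumes "\<And>a b c. T b a c = T a b c" "\<And>a b c. T a c b = T a b c"
  shows "(\<Sum>a\<in>A. \<Sum>b\<in>A. \<Sum>c\<in>A. T a b c * F b a c)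
      = (\<Sum>a\<in>A. \<Sum>b\<in>A. \<Sum>c\<in>A. T a b c * F a b c)"
    and "(\<Sum>a\<in>A. \<Sum>b\<in>A. \<Sum>c\<in>A. T a b c * F a c b)
      = (\<Sum>a\<in>A. \<Sum>b\<in>A. \<Sum>c\<in>A. T a b c * F a b c)"
proof -
  show "(\<Sum>a\<in>A. \<Sum>b\<in>A. \<Sum>c\<in>A. T a b c * F b a c)
      = (\<Sum>a\<in>A. \<Sum>b\<in>A. \<Sum>c\<in>A. T a b c * F a b c)"
    by (subst sum.swap) (simp add: assms(1))
  show "(\<Sum>a\<in>A. \<Sum>b\<in>A. \<Sum>c\<in>A. T a b c * F a c b)
      = (\<Sum>a\<in>A. \<Sum>b\<in>A. \<Sum>c\<in>A. T a b c * F a b c)"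
    by (rule sum.cong[OF refl], subst sum.swap) (simp add: assms(2))
qed

definition meet_ind :: "'a set \<Rightarrow> 'a set \<Rightarrow> real" where
  "meet_ind a b = (if a \<inter> b \<noteq> {} then 1 else 0)"

lemma meet_ind_commute: "meet_ind a b = meet_ind b a"
  by (simp add: meet_ind_def Int_commute)

lemma disj_ind_eq_1_minus_meet_ind: "disj_ind a b = 1 - meet_ind a b"
  by (simp add: disj_ind_def meet_ind_def disjnt_def)

definition star_sum :: "'a set set \<Rightarrow> ('a set \<Rightarrow> real) \<Rightarrow> 'a \<Rightarrow> real" where
  "star_sum E g v = (\<Sum>e\<in>E. if v \<in> e then g e else 0)"

definition deg_sum :: "'a set set \<Rightarrow> 'a set \<Rightarrow> real" where
  "deg_sum E e = (\<Sum>v\<in>e. real (degree E v))"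

definition links :: "'a set set \<Rightarrow> 'a set \<Rightarrow> 'a set \<Rightarrow> real" where
  "links E a b = (\<Sum>h\<in>E. meet_ind h a * meet_ind h b)"

lemma links_commute: "links E a b = links E b a"
  by (simp add: links_def mult.commute)

(* Two auxiliary invariants; they cancel in the final formula. *)

definition star_deg_sum_sq :: "'a set \<Rightarrow> 'a set set \<Rightarrow> real" where
  "star_deg_sum_sq V E = (\<Sum>v\<in>V. star_sum E (deg_sum E) v ^ 2)"

definition M2_deg_sum :: "'a set set \<Rightarrow> real" where
  "M2_deg_sum E = (\<Sum>e\<in>E. (\<Prod>v\<in>e. real (degree E v)) * deg_sum E e)"

locale finite_simple_graph =
  fixes V :: "'a set" and E :: "'a set set"
  assumes simple: "simple_graph V E"
begin

lemma edgeE: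
  assumes "e \<in> E"
  obtains u v where "e = {u, v}" "u \<noteq> v" "u \<in> V" "v \<in> V"
  using simple assms by (auto simp: simple_graph_def)

lemma finite_vertices: "finite V"
  using simple by (simp add: simple_graph_def)

lemma finite_edges: "finite E"
  using finite_vertices by (intro finite_subset[of E "Pow V"]) (auto elim: edgeE)

lemma card_edge: "e \<in> E \<Longrightarrow> card e = 2"
  by (auto elim: edgeE)

lemma finite_edge: "e \<in> E \<Longrightarrow> finite e"
  by (auto elim: edgeE)

lemma empty_not_edge: "{} \<notin> E"
  by (auto elim: edgeE)

lemma edge_eq_doubleton: "e \<in> E \<Longrightarrow> a \<in> e \<Longrightarrow> b \<in> e \<Longrightarrow> a \<noteq> b \<Longrightarrow> e = {a, b}"
  by (elim edgeE) auto

lemma doubleton_edge_neq: "{a, b} \<in> E \<Longrightarrow> a \<noteq> b"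
  using card_edge by fastforce

lemma card_Int_edges:
  assumes "e \<in> E" "f \<in> E"
  shows "real (card (e \<inter> f)) = meet_ind e f + (if e = f then 1 else 0)"
proof (cases "e = f")
  case True
  then show ?thesis
    using assms card_edge empty_not_edge by (auto simp: meet_ind_def)
next
  case False
  have "card (e \<inter> f) \<le> Suc 0"
    using False assms edge_eq_doubleton finite_edge[OF assms(1)]
    by (subst card_le_Suc0_iff_eq) blast+
  moreover have "e \<inter> f \<noteq> {} \<Longrightarrow> card (e \<inter> f) \<noteq> 0"
    using finite_edge[OF assms(1)] by simp
  ultimately show ?thesis
    using False by (cases "e \<inter> f = {}") (auto simp: meet_ind_def)
qed

lemma degree_eq_star_sum: "real (degree E v) = star_sum E (\<lambda>_. 1) v"
  unfolding degree_def star_sum_def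
  using sum.inter_filter[OF finite_edges, of "\<lambda>_. 1::real" "\<lambda>e. v \<in> e"] by simp

lemma sum_star_sum_mult:
  "(\<Sum>v\<in>V. star_sum E g v * \<phi> v) = (\<Sum>e\<in>E. g e * (\<Sum>v\<in>e. \<phi> v))"
proof -
  have "(\<Sum>v\<in>V. star_sum E g v * \<phi> v) = (\<Sum>e\<in>E. \<Sum>v\<in>V. if v \<in> e then g e * \<phi> v else 0)"
    unfolding star_sum_def sum_distrib_right by (subst sum.swap) (intro sum.cong, auto)
  also have "\<dots> = (\<Sum>e\<in>E. g e * (\<Sum>v\<in>e. \<phi> v))"
  proof (rule sum.cong[OF refl])
    fix e assume "e \<in> E"
    then have "V \<inter> e = e" by (auto elim: edgeE)
    then show "(\<Sum>v\<in>V. if v \<in> e then g e * \<phi> v else 0) = g e * (\<Sum>v\<in>e. \<phi> v)"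
      by (simp add: sum.inter_restrict[OF finite_vertices, symmetric] sum_distrib_left)
  qed
  finally show ?thesis .
qed

lemma sum_edges_sum_vertices:
  "(\<Sum>e\<in>E. \<Sum>v\<in>e. \<phi> v) = (\<Sum>v\<in>V. real (degree E v) * \<phi> v)"
  using sum_star_sum_mult[of "\<lambda>_. 1" \<phi>] by (simp add: degree_eq_star_sum)

lemma sum_star_sum_degree:
  "(\<Sum>v\<in>V. star_sum E g v * real (degree E v)) = (\<Sum>e\<in>E. g e * deg_sum E e)"
  by (simp add: sum_star_sum_mult deg_sum_def)

lemma sum_edge_star_sum:
  assumes "e \<in> E"
  shows "(\<Sum>v\<in>e. star_sum E g v) = (\<Sum>f\<in>E. g f * real (card (e \<inter> f)))"
  unfolding star_sum_def
  by (subst sum.swap) (simp add: sum.inter_restrict[OF finite_edge[OF assms], symmetric] Int_def,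
      simp add: mult.commute)

lemma sum_meet_ind_mult:
  "(\<Sum>e\<in>E. \<Sum>f\<in>E. meet_ind e f * g e * k f)
    = (\<Sum>v\<in>V. star_sum E g v * star_sum E k v) - (\<Sum>e\<in>E. g e * k e)"
proof -
  have "(\<Sum>v\<in>V. star_sum E g v * star_sum E k v)
      = (\<Sum>e\<in>E. \<Sum>f\<in>E. g e * k f * real (card (e \<inter> f)))"
    by (simp add: sum_star_sum_mult sum_edge_star_sum sum_distrib_left mult.assoc cong: sum.cong)
  also have "\<dots> = (\<Sum>e\<in>E. \<Sum>f\<in>E. meet_ind e f * g e * k f + (if e = f then g e * k f else 0))"
    by (intro sum.cong refl) (simp add: card_Int_edges algebra_simps)
  also have "\<dots> = (\<Sum>e\<in>E. \<Sum>f\<in>E. meet_ind e f * g e * k f) + (\<Sum>e\<in>E. g e * k e)"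
    by (simp add: sum.distrib finite_edges)
  finally show ?thesis by simp
qed

lemma sum_disj_ind_mult:
  "(\<Sum>e\<in>E. \<Sum>f\<in>E. disj_ind e f * g e * k f)
    = sum g E * sum k E - (\<Sum>v\<in>V. star_sum E g v * star_sum E k v) + (\<Sum>e\<in>E. g e * k e)"
proof -
  have "(\<Sum>e\<in>E. \<Sum>f\<in>E. disj_ind e f * g e * k f)
      = (\<Sum>e\<in>E. \<Sum>f\<in>E. g e * k f - meet_ind e f * g e * k f)"
    by (simp add: disj_ind_eq_1_minus_meet_ind algebra_simps)
  then show ?thesis
    by (simp add: sum_subtractf sum_product sum_meet_ind_mult)
qed

lemma sum_meet_ind_edge:
  assumes "e \<in> E"
  shows "(\<Sum>h\<in>E. meet_ind h e) = deg_sum E e - 1"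
proof -
  have "deg_sum E e = (\<Sum>f\<in>E. meet_ind e f + (if e = f then 1 else 0))"
    using assms by (simp add: deg_sum_def degree_eq_star_sum sum_edge_star_sum card_Int_edges)
  also have "\<dots> = (\<Sum>h\<in>E. meet_ind h e) + 1"
    using assms by (simp add: sum.distrib finite_edges meet_ind_commute)
  finally show ?thesis by simp
qed

lemma links_eq_card: "links E a b = real (card {h\<in>E. h \<inter> a \<noteq> {} \<and> h \<inter> b \<noteq> {}})"
proof -
  have "links E a b = (\<Sum>h\<in>E. if h \<inter> a \<noteq> {} \<and> h \<inter> b \<noteq> {} then 1 else 0)"
    unfolding links_def by (rule sum.cong) (auto simp: meet_ind_def)
  then show ?thesis
    using sum.inter_filter[OF finite_edges, of "\<lambda>_. 1::real" "\<lambda>h. h \<inter> a \<noteq> {} \<and> h \<inter> b \<noteq> {}"]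
    by simp
qed

lemma meet_ind_three_disjoint:
  assumes "h \<in> E" "disjnt a b" "disjnt a c" "disjnt b c"
  shows "meet_ind h a * meet_ind h b * meet_ind h c = 0"
proof (rule ccontr)
  assume "meet_ind h a * meet_ind h b * meet_ind h c \<noteq> 0"
  then have "h \<inter> a \<noteq> {}" "h \<inter> b \<noteq> {}" "h \<inter> c \<noteq> {}"
    by (simp_all add: meet_ind_def split: if_splits)
  then obtain x y z where xyz: "x \<in> h" "x \<in> a" "y \<in> h" "y \<in> b" "z \<in> h" "z \<in> c"
    by blast
  have "x \<noteq> y" "x \<noteq> z" "y \<noteq> z"
    using assms(2-4) xyz by (auto simp: disjnt_def)
  moreover have "h = {x, y}"
    using edge_eq_doubleton[OF assms(1)] xyz \<open>x \<noteq> y\<close> by blast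
  ultimately show False
    using xyz(5) by blast
qed

lemma sum_disj_ind_two:
  assumes "a \<in> E" "b \<in> E"
  shows "(\<Sum>h\<in>E. disj_ind a h * disj_ind b h)
    = real (card E) + 2 - deg_sum E a - deg_sum E b + links E a b"
proof -
  have "(\<Sum>h\<in>E. disj_ind a h * disj_ind b h)
      = (\<Sum>h\<in>E. 1 - meet_ind h a - meet_ind h b + meet_ind h a * meet_ind h b)"
    by (intro sum.cong refl) (simp add: disj_ind_eq_1_minus_meet_ind meet_ind_commute algebra_simps)
  then show ?thesis
    using assms by (simp add: sum.distrib sum_subtractf links_def sum_meet_ind_edge)
qed

lemma sum_disj_ind_three:
  assumes "a \<in> E" "b \<in> E" "c \<in> E" and "disjnt a b" "disjnt a c" "disjnt b c"
  shows "(\<Sum>h\<in>E. disj_ind a h * disj_ind b h * disj_ind c h)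
    = real (card E) + 3 - deg_sum E a - deg_sum E b - deg_sum E c
      + links E a b + links E a c + links E b c"
proof -
  have "(\<Sum>h\<in>E. disj_ind a h * disj_ind b h * disj_ind c h)
      = (\<Sum>h\<in>E. 1 - meet_ind h a - meet_ind h b - meet_ind h c + meet_ind h a * meet_ind h b
           + meet_ind h a * meet_ind h c + meet_ind h b * meet_ind h c
           - meet_ind h a * meet_ind h b * meet_ind h c)"
    by (intro sum.cong refl) (simp add: disj_ind_eq_1_minus_meet_ind meet_ind_commute algebra_simps)
  also have "\<dots> = (\<Sum>h\<in>E. 1 - meet_ind h a - meet_ind h b - meet_ind h c + meet_ind h a * meet_ind h b
           + meet_ind h a * meet_ind h c + meet_ind h b * meet_ind h c)"
    using meet_ind_three_disjoint assms(4-6) by (intro sum.cong) auto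
  finally show ?thesis
    using assms(1-3) by (simp add: sum.distrib sum_subtractf links_def sum_meet_ind_edge)
qed

lemma card_matchings_4_pairs:
  defines "m \<equiv> real (card E)"
  shows "24 * real (card (matchings E 4))
    = (\<Sum>a\<in>E. \<Sum>b\<in>E. disj_ind a b * (m + 3 - 3 * deg_sum E a + 3 * links E a b)
        * (m + 2 - deg_sum E a - deg_sum E b + links E a b))"
proof -
  define T :: "'a set \<Rightarrow> 'a set \<Rightarrow> 'a set \<Rightarrow> real"
    where "T a b c = disj_ind a b * disj_ind a c * disj_ind b c" for a b c
  have T_swap: "T b a c = T a b c" "T a c b = T a b c" for a b c
    by (simp_all add: T_def disj_ind_commute mult_ac)
  note swap = sum3_swap_symmetric[of T, OF T_swap, where A = E]
  let ?S = "\<lambda>f. \<Sum>a\<in>E. \<Sum>b\<in>E. \<Sum>c\<in>E. T a b c * f a b c"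
  have "24 * real (card (matchings E 4))
      = (\<Sum>a\<in>E. \<Sum>b\<in>E. \<Sum>c\<in>E. T a b c * (\<Sum>d\<in>E. disj_ind a d * disj_ind b d * disj_ind c d))"
    unfolding card_matchings_4[OF finite_edges empty_not_edge] T_def ..
  also have "\<dots> = ?S (\<lambda>a b c. m + 3 - deg_sum E a - deg_sum E b - deg_sum E c
          + links E a b + links E a c + links E b c)"
  proof (intro sum.cong refl)
    fix a b c assume abc: "a \<in> E" "b \<in> E" "c \<in> E"
    show "T a b c * (\<Sum>d\<in>E. disj_ind a d * disj_ind b d * disj_ind c d)
        = T a b c * (m + 3 - deg_sum E a - deg_sum E b - deg_sum E c
          + links E a b + links E a c + links E b c)"
    proof (cases "T a b c = 0")
      case False
      then have "disjnt a b" "disjnt a c" "disjnt b c"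
        by (auto simp: T_def intro!: disjnt_if_disj_ind_nonzero)
      then show ?thesis
        using abc by (simp add: sum_disj_ind_three m_def)
    qed simp
  qed
  also have "\<dots> = ?S (\<lambda>_ _ _. m + 3) - ?S (\<lambda>a _ _. deg_sum E a) - ?S (\<lambda>_ b _. deg_sum E b)
      - ?S (\<lambda>_ _ c. deg_sum E c) + ?S (\<lambda>a b _. links E a b) + ?S (\<lambda>a _ c. links E a c)
      + ?S (\<lambda>_ b c. links E b c)"
    by (simp only: distrib_left right_diff_distrib sum.distrib sum_subtractf)
  \<comment> \<open>\<open>T\<close> is symmetric, so the terms in \<open>b\<close> and \<open>c\<close> equal the corresponding terms in \<open>a\<close>.\<close>
  also have "\<dots> = ?S (\<lambda>_ _ _. m + 3) - 3 * ?S (\<lambda>a _ _. deg_sum E a) + 3 * ?S (\<lambda>a b _. links E a b)"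
    using swap(1)[of "\<lambda>a b c. deg_sum E a"] swap(2)[of "\<lambda>a b c. deg_sum E b"]
      swap(2)[of "\<lambda>a b c. links E a b"] swap(1)[of "\<lambda>a b c. links E a c"]
    by simp
  also have "\<dots> = ?S (\<lambda>a b _. m + 3 - 3 * deg_sum E a + 3 * links E a b)"
    by (simp add: distrib_left right_diff_distrib sum.distrib sum_subtractf sum_distrib_left mult_ac)
  also have "\<dots> = (\<Sum>a\<in>E. \<Sum>b\<in>E. disj_ind a b * (m + 3 - 3 * deg_sum E a + 3 * links E a b)
        * (\<Sum>c\<in>E. disj_ind a c * disj_ind b c))"
    by (simp add: T_def sum_distrib_left sum_distrib_right mult_ac)
  also have "\<dots> = (\<Sum>a\<in>E. \<Sum>b\<in>E. disj_ind a b * (m + 3 - 3 * deg_sum E a + 3 * links E a b)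
        * (m + 2 - deg_sum E a - deg_sum E b + links E a b))"
    by (simp add: sum_disj_ind_two m_def)
  finally show ?thesis .
qed

lemma sum_edges_degree_pow:
  "(\<Sum>e\<in>E. \<Sum>v\<in>e. real (degree E v) ^ k) = M1_pow V E (Suc k)"
  by (simp add: sum_edges_sum_vertices M1_pow_def)

lemma sum_deg_sum: "(\<Sum>e\<in>E. deg_sum E e) = M1_pow V E 2"
  using sum_edges_degree_pow[of 1] by (simp add: deg_sum_def numeral_2_eq_2)

lemma sum_deg_sum_sq: "(\<Sum>e\<in>E. deg_sum E e ^ 2) = M1_pow V E 3 + 2 * M2 E"
proof -
  have "deg_sum E e ^ 2 = (\<Sum>v\<in>e. real (degree E v) ^ 2) + 2 * (\<Prod>v\<in>e. real (degree E v))"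
    if "e \<in> E" for e
    using that by (elim edgeE) (simp add: deg_sum_def power2_eq_square algebra_simps)
  then show ?thesis
    by (simp add: sum.distrib sum_edges_degree_pow M2_def sum_distrib_left numeral_3_eq_3
        numeral_2_eq_2 del: power_Suc cong: sum.cong)
qed

lemma sum_deg_sum_cube: "(\<Sum>e\<in>E. deg_sum E e ^ 3) = M1_pow V E 4 + 3 * M2_deg_sum E"
proof -
  have "deg_sum E e ^ 3
      = (\<Sum>v\<in>e. real (degree E v) ^ 3) + 3 * ((\<Prod>v\<in>e. real (degree E v)) * deg_sum E e)"
    if "e \<in> E" for e
    using that by (elim edgeE) (simp add: deg_sum_def power3_eq_cube algebra_simps)
  then show ?thesis
    by (simp add: sum.distrib sum_edges_degree_pow M2_deg_sum_def sum_distrib_left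
        numeral_eq_Suc del: power_Suc cong: sum.cong)
qed

lemma sum_star_deg_sum_degree_sq:
  "(\<Sum>v\<in>V. star_sum E (deg_sum E) v * real (degree E v) ^ 2) = M1_pow V E 4 + M2_deg_sum E"
proof -
  have "deg_sum E e * (\<Sum>v\<in>e. real (degree E v) ^ 2)
      = (\<Sum>v\<in>e. real (degree E v) ^ 3) + (\<Prod>v\<in>e. real (degree E v)) * deg_sum E e"
    if "e \<in> E" for e
    using that by (elim edgeE) (simp add: deg_sum_def power2_eq_square power3_eq_cube algebra_simps)
  then show ?thesis
    by (simp add: sum_star_sum_mult sum.distrib sum_edges_degree_pow M2_deg_sum_def
        numeral_eq_Suc del: power_Suc cong: sum.cong)
qed

lemma sum_disj_ind: "(\<Sum>a\<in>E. \<Sum>b\<in>E. disj_ind a b) = real (card E) ^ 2 - M1_pow V E 2 + real (card E)"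
  using sum_disj_ind_mult[of "\<lambda>_. 1" "\<lambda>_. 1"]
  by (simp add: M1_pow_def power2_eq_square flip: degree_eq_star_sum)

lemma sum_disj_ind_deg_sum:
  "(\<Sum>a\<in>E. \<Sum>b\<in>E. disj_ind a b * deg_sum E a)
    = M1_pow V E 2 * real (card E) - (M1_pow V E 3 + 2 * M2 E) + M1_pow V E 2"
  using sum_disj_ind_mult[of "deg_sum E" "\<lambda>_. 1"]
  by (simp add: sum_deg_sum sum_star_sum_degree sum_deg_sum_sq[unfolded power2_eq_square]
      flip: degree_eq_star_sum)

lemma sum_disj_ind_deg_sum_sq:
  "(\<Sum>a\<in>E. \<Sum>b\<in>E. disj_ind a b * deg_sum E a ^ 2)
    = (M1_pow V E 3 + 2 * M2 E) * real (card E) - (M1_pow V E 4 + 3 * M2_deg_sum E)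
      + (M1_pow V E 3 + 2 * M2 E)"
  using sum_disj_ind_mult[of "\<lambda>e. deg_sum E e ^ 2" "\<lambda>_. 1"]
  by (simp add: sum_star_sum_degree sum_deg_sum_sq[unfolded power2_eq_square]
      sum_deg_sum_cube[unfolded power3_eq_cube] power2_eq_square flip: degree_eq_star_sum)

lemma sum_disj_ind_deg_sum_deg_sum:
  "(\<Sum>a\<in>E. \<Sum>b\<in>E. disj_ind a b * deg_sum E a * deg_sum E b)
    = M1_pow V E 2 ^ 2 - star_deg_sum_sq V E + (M1_pow V E 3 + 2 * M2 E)"
  using sum_disj_ind_mult[of "deg_sum E" "deg_sum E"]
  by (simp add: sum_deg_sum sum_deg_sum_sq[unfolded power2_eq_square] star_deg_sum_sq_def
      power2_eq_square)

lemma EM2_eq: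
  "2 * EM2 E = star_deg_sum_sq V E - 4 * (M1_pow V E 3 + 2 * M2 E) + 4 * M1_pow V E 2
    - 2 * (M1_pow V E 3 + 2 * M2 E - 4 * M1_pow V E 2 + 4 * real (card E))"
proof -
  define t where "t e = deg_sum E e - 2" for e
  have "edge_degree E = t"
    by (simp add: fun_eq_iff edge_degree_def deg_sum_def t_def)
  then have "2 * EM2 E = (\<Sum>e\<in>E. \<Sum>f\<in>E. if e \<noteq> f \<and> e \<inter> f \<noteq> {} then t e * t f else 0)"
    unfolding EM2_def by (simp only:) (rule sum_unordered_pairs[OF finite_edges], blast)
  also have "\<dots> = (\<Sum>e\<in>E. \<Sum>f\<in>E. meet_ind e f * t e * t f - (if e = f then t e * t f else 0))"
    using empty_not_edge by (intro sum.cong refl) (auto simp: meet_ind_def)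
  also have "\<dots> = (\<Sum>v\<in>V. star_sum E t v ^ 2) - 2 * (\<Sum>e\<in>E. t e ^ 2)"
    by (simp add: sum_subtractf finite_edges sum_meet_ind_mult power2_eq_square)
  also have "star_sum E t = (\<lambda>v. star_sum E (deg_sum E) v - 2 * real (degree E v))"
    by (simp add: fun_eq_iff star_sum_def t_def degree_eq_star_sum sum_distrib_left
        flip: sum_subtractf cong: if_cong) (intro allI sum.cong, auto)
  also have "(\<Sum>v\<in>V. (star_sum E (deg_sum E) v - 2 * real (degree E v)) ^ 2)
      = star_deg_sum_sq V E - 4 * (\<Sum>v\<in>V. star_sum E (deg_sum E) v * real (degree E v))
        + 4 * M1_pow V E 2"
    by (simp add: power2_diff star_deg_sum_sq_def M1_pow_def sum.distrib sum_subtractf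
        sum_distrib_left power_mult_distrib mult_ac)
  also have "(\<Sum>e\<in>E. t e ^ 2)
      = (\<Sum>e\<in>E. deg_sum E e ^ 2) - 4 * (\<Sum>e\<in>E. deg_sum E e) + 4 * real (card E)"
    by (simp add: t_def power2_diff sum.distrib sum_subtractf sum_distrib_left sum_distrib_right
        mult_ac)
  finally show ?thesis
    by (simp add: sum_star_sum_degree sum_deg_sum sum_deg_sum_sq
        sum_deg_sum_sq[unfolded power2_eq_square])
qed

end

locale graph_girth_ge_5 = finite_simple_graph +
  assumes girth_ge_5: "girth E \<ge> 5"
begin

lemma cycle_length_ge_5: "is_cycle E cs \<Longrightarrow> 5 \<le> length cs"
proof -
  assume "is_cycle E cs"
  then have "girth E \<le> enat (length cs)"
    unfolding girth_def by (rule INF_lower[OF CollectI])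
  with girth_ge_5 show ?thesis
    by (metis enat_ord_simps(1) numeral_eq_enat order_trans)
qed

lemma no_triangle:
  assumes "{a, b} \<in> E" "{b, c} \<in> E" "{c, a} \<in> E"
  shows False
proof -
  have "is_cycle E [a, b, c]"
    using assms doubleton_edge_neq[OF assms(1)] doubleton_edge_neq[OF assms(2)]
      doubleton_edge_neq[OF assms(3)]
    by (simp add: is_cycle_def All_less_Suc)
  then show False
    using cycle_length_ge_5 by fastforce
qed

lemma no_square:
  assumes "{a, b} \<in> E" "{b, c} \<in> E" "{c, d} \<in> E" "{d, a} \<in> E" "a \<noteq> c" "b \<noteq> d"
  shows False
proof -
  have "is_cycle E [a, b, c, d]"
    using assms doubleton_edge_neq[OF assms(1)] doubleton_edge_neq[OF assms(2)]
      doubleton_edge_neq[OF assms(3)] doubleton_edge_neq[OF assms(4)]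
    by (simp add: is_cycle_def All_less_Suc)
  then show False
    using cycle_length_ge_5 by fastforce
qed

lemma linking_edge_unique:
  assumes e: "e1 \<in> E" "e2 \<in> E" "disjnt e1 e2"
    and h: "h \<in> E" "h \<inter> e1 \<noteq> {}" "h \<inter> e2 \<noteq> {}"
    and h': "h' \<in> E" "h' \<inter> e1 \<noteq> {}" "h' \<inter> e2 \<noteq> {}"
  shows "h = h'"
proof -
  obtain x y x' y' where xy: "x \<in> h" "x \<in> e1" "y \<in> h" "y \<in> e2"
    and xy': "x' \<in> h'" "x' \<in> e1" "y' \<in> h'" "y' \<in> e2"
    using h h' by blast
  have neq: "x \<noteq> y" "x \<noteq> y'" "x' \<noteq> y" "x' \<noteq> y'"
    using xy xy' e(3) by (auto simp: disjnt_def)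
  have hxy: "h = {x, y}" and hxy': "h' = {x', y'}"
    using edge_eq_doubleton h(1) h'(1) xy xy' neq by auto
  show ?thesis
  proof (cases "x = x'"; cases "y = y'")
    assume "x \<noteq> x'" "y \<noteq> y'"
    then have "e1 = {x', x}" "e2 = {y, y'}"
      using edge_eq_doubleton e xy xy' by auto
    then show ?thesis
      using no_square[of x y y' x'] h(1) h'(1) e(1,2) hxy hxy' neq by (auto simp: insert_commute)
  next
    assume "x \<noteq> x'" "y = y'"
    then have "e1 = {x', x}"
      using edge_eq_doubleton e xy xy' by auto
    then show ?thesis
      using no_triangle[of x y x'] h(1) h'(1) e(1) hxy hxy' \<open>y = y'\<close> by (auto simp: insert_commute)
  next
    assume "x = x'" "y \<noteq> y'"
    then have "e2 = {y, y'}"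
      using edge_eq_doubleton e xy xy' by auto
    then show ?thesis
      using no_triangle[of x y y'] h(1) h'(1) e(2) hxy hxy' \<open>x = x'\<close> by (auto simp: insert_commute)
  qed (simp add: hxy hxy')
qed

lemma links_0_or_1:
  assumes "e1 \<in> E" "e2 \<in> E" "disjnt e1 e2"
  shows "links E e1 e2 = 0 \<or> links E e1 e2 = 1"
proof -
  have "card {h\<in>E. h \<inter> e1 \<noteq> {} \<and> h \<inter> e2 \<noteq> {}} \<le> Suc 0"
    using linking_edge_unique[OF assms] finite_edges by (auto simp: card_le_Suc0_iff_eq)
  then have "card {h\<in>E. h \<inter> e1 \<noteq> {} \<and> h \<inter> e2 \<noteq> {}} \<in> {0, 1}"
    by auto
  then show ?thesis
    unfolding links_eq_card by auto
qed

lemma disjnt_path_ends: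
  assumes "{u, v} \<in> E" "e1 \<in> E" "e2 \<in> E" "u \<in> e1" "v \<in> e2" "e1 \<noteq> {u, v}" "e2 \<noteq> {u, v}"
  shows "disjnt e1 e2"
proof -
  have "\<exists>p. p \<in> e1 \<and> p \<noteq> u" "\<exists>q. q \<in> e2 \<and> q \<noteq> v"
    using assms(2,3) by (auto elim!: edgeE)
  then obtain p q where "p \<in> e1" "p \<noteq> u" "q \<in> e2" "q \<noteq> v"
    by blast
  then have e1: "e1 = {u, p}" and e2: "e2 = {v, q}"
    using edge_eq_doubleton assms(2-5) by auto
  have "p \<noteq> v" "q \<noteq> u"
    using assms(6,7) e1 e2 by (auto simp: insert_commute)
  moreover have "p \<noteq> q"
    using no_triangle[of u v p] assms(1-3) e1 e2 by (auto simp: insert_commute)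
  moreover have "u \<noteq> v"
    using doubleton_edge_neq[OF assms(1)] .
  ultimately show ?thesis
    using e1 e2 by (auto simp: disjnt_def)
qed

lemma disj_ind_meet_ind_middle_edge:
  assumes h: "h \<in> E" "h = {u, v}" and e: "e1 \<in> E" "e2 \<in> E"
  shows "disj_ind e1 e2 * meet_ind h e1 * meet_ind h e2
    = (if u \<in> e1 \<and> e1 \<noteq> h \<and> v \<in> e2 \<and> e2 \<noteq> h then 1 else 0)
      + (if v \<in> e1 \<and> e1 \<noteq> h \<and> u \<in> e2 \<and> e2 \<noteq> h then 1 else 0)"
proof -
  let ?L = "disjnt e1 e2 \<and> h \<inter> e1 \<noteq> {} \<and> h \<inter> e2 \<noteq> {}"
  let ?R1 = "u \<in> e1 \<and> e1 \<noteq> h \<and> v \<in> e2 \<and> e2 \<noteq> h"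
  let ?R2 = "v \<in> e1 \<and> e1 \<noteq> h \<and> u \<in> e2 \<and> e2 \<noteq> h"
  have uv: "u \<noteq> v"
    using doubleton_edge_neq h by blast
  have "\<not> (?R1 \<and> ?R2)"
    using edge_eq_doubleton[OF e(1) _ _ uv] h(2) by blast
  moreover have "?R1 \<Longrightarrow> ?L" "?R2 \<Longrightarrow> ?L"
    using disjnt_path_ends[of u v e1 e2] disjnt_path_ends[of v u e1 e2] h e
    by (auto simp: insert_commute)
  moreover have "?R1 \<or> ?R2" if L: ?L
  proof -
    have "e1 \<noteq> h" "e2 \<noteq> h"
      using L by (auto simp: disjnt_def)
    moreover have "u \<in> e1 \<or> v \<in> e1" "u \<in> e2 \<or> v \<in> e2"
      using L h(2) by auto
    moreover have "\<not> (u \<in> e1 \<and> u \<in> e2)" "\<not> (v \<in> e1 \<and> v \<in> e2)"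
      using L by (auto simp: disjnt_def)
    ultimately show ?thesis
      by blast
  qed
  moreover have "disj_ind e1 e2 * meet_ind h e1 * meet_ind h e2 = (if ?L then 1 else 0)"
    by (simp add: disj_ind_def meet_ind_def)
  ultimately show ?thesis
    by auto
qed

lemma sum_edges_at_except:
  assumes "h \<in> E" "u \<in> h"
  shows "(\<Sum>e\<in>E. if u \<in> e \<and> e \<noteq> h then g e else 0) = star_sum E g u - g h"
proof -
  have "(if u \<in> e \<and> e \<noteq> h then g e else 0) = (if u \<in> e then g e else 0) - (if e = h then g e else 0)"
    for e
    using assms(2) by auto
  then show ?thesis
    using assms(1) by (simp add: sum_subtractf star_sum_def finite_edges)
qed

lemma sum_disj_ind_links_mult:
  "(\<Sum>e1\<in>E. \<Sum>e2\<in>E. disj_ind e1 e2 * links E e1 e2 * g e1 * k e2)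
    = (\<Sum>h\<in>E. \<Sum>x\<in>h. \<Sum>y\<in>h - {x}. (star_sum E g x - g h) * (star_sum E k y - k h))"
proof -
  have "(\<Sum>e1\<in>E. \<Sum>e2\<in>E. disj_ind e1 e2 * links E e1 e2 * g e1 * k e2)
      = (\<Sum>e1\<in>E. \<Sum>e2\<in>E. \<Sum>h\<in>E. disj_ind e1 e2 * meet_ind h e1 * meet_ind h e2 * g e1 * k e2)"
    by (simp add: links_def sum_distrib_left sum_distrib_right mult_ac)
  also have "\<dots> = (\<Sum>h\<in>E. \<Sum>e1\<in>E. \<Sum>e2\<in>E. disj_ind e1 e2 * meet_ind h e1 * meet_ind h e2 * g e1 * k e2)"
    by (subst sum.swap, rule sum.cong[OF refl], rule sum.swap)
  also have "\<dots> = (\<Sum>h\<in>E. \<Sum>x\<in>h. \<Sum>y\<in>h - {x}. (star_sum E g x - g h) * (star_sum E k y - k h))"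
  proof (rule sum.cong[OF refl])
    fix h assume h: "h \<in> E"
    then obtain u v where uv: "h = {u, v}" "u \<noteq> v"
      by (elim edgeE)
    let ?at = "\<lambda>w f e. if w \<in> e \<and> e \<noteq> h then f e else 0"
    have "(\<Sum>e1\<in>E. \<Sum>e2\<in>E. disj_ind e1 e2 * meet_ind h e1 * meet_ind h e2 * g e1 * k e2)
        = (\<Sum>e1\<in>E. \<Sum>e2\<in>E. ?at u g e1 * ?at v k e2 + ?at v g e1 * ?at u k e2)"
    proof (intro sum.cong refl)
      fix e1 e2 assume "e1 \<in> E" "e2 \<in> E"
      then show "disj_ind e1 e2 * meet_ind h e1 * meet_ind h e2 * g e1 * k e2
          = ?at u g e1 * ?at v k e2 + ?at v g e1 * ?at u k e2"
        unfolding disj_ind_meet_ind_middle_edge[OF h uv(1) \<open>e1 \<in> E\<close> \<open>e2 \<in> E\<close>]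
        by (simp add: distrib_right)
    qed
    also have "\<dots> = (\<Sum>e\<in>E. ?at u g e) * (\<Sum>e\<in>E. ?at v k e) + (\<Sum>e\<in>E. ?at v g e) * (\<Sum>e\<in>E. ?at u k e)"
      by (simp add: sum.distrib sum_product)
    also have "\<dots> = (\<Sum>x\<in>h. \<Sum>y\<in>h - {x}. (star_sum E g x - g h) * (star_sum E k y - k h))"
      using uv sum_edges_at_except[OF h] by (simp add: insert_Diff_if)
    finally show "(\<Sum>e1\<in>E. \<Sum>e2\<in>E. disj_ind e1 e2 * meet_ind h e1 * meet_ind h e2 * g e1 * k e2)
        = (\<Sum>x\<in>h. \<Sum>y\<in>h - {x}. (star_sum E g x - g h) * (star_sum E k y - k h))" .
  qed
  finally show ?thesis .
qed

lemma sum_disj_ind_links: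
  "(\<Sum>a\<in>E. \<Sum>b\<in>E. disj_ind a b * links E a b) = 2 * M2 E - 2 * M1_pow V E 2 + 2 * real (card E)"
proof -
  have "(\<Sum>x\<in>h. \<Sum>y\<in>h - {x}. (real (degree E x) - 1) * (real (degree E y) - 1))
      = 2 * (\<Prod>v\<in>h. real (degree E v)) - 2 * deg_sum E h + 2"
    if "h \<in> E" for h
    using that by (elim edgeE) (simp add: deg_sum_def insert_Diff_if algebra_simps)
  then have "(\<Sum>a\<in>E. \<Sum>b\<in>E. disj_ind a b * links E a b)
      = (\<Sum>h\<in>E. 2 * (\<Prod>v\<in>h. real (degree E v)) - 2 * deg_sum E h + 2)"
    using sum_disj_ind_links_mult[of "\<lambda>_. 1" "\<lambda>_. 1"]
    by (simp flip: degree_eq_star_sum cong: sum.cong)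
  then show ?thesis
    by (simp add: sum.distrib sum_subtractf M2_def sum_deg_sum flip: sum_distrib_left)
qed

lemma sum_disj_ind_links_deg_sum:
  "(\<Sum>a\<in>E. \<Sum>b\<in>E. disj_ind a b * links E a b * deg_sum E a)
    = star_deg_sum_sq V E - (M1_pow V E 4 + M2_deg_sum E) - 2 * (M1_pow V E 3 + 2 * M2 E)
      + 2 * M1_pow V E 2"
proof -
  let ?G = "star_sum E (deg_sum E)"
  let ?d = "\<lambda>v. real (degree E v)"
  have "(\<Sum>x\<in>h. \<Sum>y\<in>h - {x}. (?G x - deg_sum E h) * (?d y - 1))
      = deg_sum E h * (\<Sum>x\<in>h. ?G x) - (\<Sum>x\<in>h. ?G x * ?d x) - (\<Sum>x\<in>h. ?G x)
        - deg_sum E h ^ 2 + 2 * deg_sum E h"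
    if "h \<in> E" for h
    using that by (elim edgeE) (simp add: deg_sum_def insert_Diff_if power2_eq_square algebra_simps)
  then have "(\<Sum>a\<in>E. \<Sum>b\<in>E. disj_ind a b * links E a b * deg_sum E a)
      = (\<Sum>h\<in>E. deg_sum E h * (\<Sum>x\<in>h. ?G x)) - (\<Sum>h\<in>E. \<Sum>x\<in>h. ?G x * ?d x)
        - (\<Sum>h\<in>E. \<Sum>x\<in>h. ?G x) - (\<Sum>h\<in>E. deg_sum E h ^ 2) + 2 * (\<Sum>h\<in>E. deg_sum E h)"
    using sum_disj_ind_links_mult[of "deg_sum E" "\<lambda>_. 1"]
    by (simp add: sum.distrib sum_subtractf sum_distrib_left flip: degree_eq_star_sum cong: sum.cong)
  also have "(\<Sum>h\<in>E. deg_sum E h * (\<Sum>x\<in>h. ?G x)) = star_deg_sum_sq V E"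
    by (simp add: star_deg_sum_sq_def power2_eq_square flip: sum_star_sum_mult)
  also have "(\<Sum>h\<in>E. \<Sum>x\<in>h. ?G x * ?d x) = M1_pow V E 4 + M2_deg_sum E"
    by (simp add: sum_edges_sum_vertices power2_eq_square mult_ac
        flip: sum_star_deg_sum_degree_sq)
  also have "(\<Sum>h\<in>E. \<Sum>x\<in>h. ?G x) = M1_pow V E 3 + 2 * M2 E"
    using sum_star_sum_degree[of "deg_sum E"]
    by (simp add: sum_edges_sum_vertices mult.commute sum_deg_sum_sq[unfolded power2_eq_square])
  finally show ?thesis
    by (simp add: sum_deg_sum_sq sum_deg_sum)
qed

lemma card_matchings_4_expanded:
  defines "m \<equiv> real (card E)"
  shows "24 * real (card (matchings E 4))
    = (m + 3) * (m + 2) * (\<Sum>a\<in>E. \<Sum>b\<in>E. disj_ind a b)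
      - (5 * m + 12) * (\<Sum>a\<in>E. \<Sum>b\<in>E. disj_ind a b * deg_sum E a)
      + 3 * (\<Sum>a\<in>E. \<Sum>b\<in>E. disj_ind a b * deg_sum E a ^ 2)
      + 3 * (\<Sum>a\<in>E. \<Sum>b\<in>E. disj_ind a b * deg_sum E a * deg_sum E b)
      + (4 * m + 12) * (\<Sum>a\<in>E. \<Sum>b\<in>E. disj_ind a b * links E a b)
      - 9 * (\<Sum>a\<in>E. \<Sum>b\<in>E. disj_ind a b * links E a b * deg_sum E a)"
proof -
  let ?s = "deg_sum E" and ?l = "links E"
  have links_sq: "disj_ind a b * (?l a b * ?l a b) = disj_ind a b * ?l a b"
    if "a \<in> E" "b \<in> E" for a b
    using links_0_or_1[OF that] by (cases "disjnt a b") (auto simp: disj_ind_def)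
  have sym: "(\<Sum>a\<in>E. \<Sum>b\<in>E. disj_ind a b * f b a) = (\<Sum>a\<in>E. \<Sum>b\<in>E. disj_ind a b * f a b)" for f
    by (subst sum.swap) (simp add: disj_ind_commute)
  have "24 * real (card (matchings E 4))
      = (\<Sum>a\<in>E. \<Sum>b\<in>E. (m + 3) * (m + 2) * disj_ind a b - (4 * m + 9) * (disj_ind a b * ?s a)
          - (m + 3) * (disj_ind a b * ?s b) + 3 * (disj_ind a b * ?s a ^ 2)
          + 3 * (disj_ind a b * ?s a * ?s b) + (4 * m + 12) * (disj_ind a b * ?l a b)
          - 6 * (disj_ind a b * ?l a b * ?s a) - 3 * (disj_ind a b * ?l a b * ?s b))"
    unfolding card_matchings_4_pairs m_def[symmetric]
    using links_sq by (intro sum.cong refl) (simp add: algebra_simps power2_eq_square)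
  also have "\<dots> = (m + 3) * (m + 2) * (\<Sum>a\<in>E. \<Sum>b\<in>E. disj_ind a b)
      - (4 * m + 9) * (\<Sum>a\<in>E. \<Sum>b\<in>E. disj_ind a b * ?s a)
      - (m + 3) * (\<Sum>a\<in>E. \<Sum>b\<in>E. disj_ind a b * ?s b)
      + 3 * (\<Sum>a\<in>E. \<Sum>b\<in>E. disj_ind a b * ?s a ^ 2)
      + 3 * (\<Sum>a\<in>E. \<Sum>b\<in>E. disj_ind a b * ?s a * ?s b)
      + (4 * m + 12) * (\<Sum>a\<in>E. \<Sum>b\<in>E. disj_ind a b * ?l a b)
      - 6 * (\<Sum>a\<in>E. \<Sum>b\<in>E. disj_ind a b * ?l a b * ?s a)
      - 3 * (\<Sum>a\<in>E. \<Sum>b\<in>E. disj_ind a b * ?l a b * ?s b)"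
    by (simp only: sum.distrib sum_subtractf sum_distrib_left)
  also have "(\<Sum>a\<in>E. \<Sum>b\<in>E. disj_ind a b * ?l a b * ?s b)
      = (\<Sum>a\<in>E. \<Sum>b\<in>E. disj_ind a b * ?l a b * ?s a)"
    using sym[of "\<lambda>a b. ?l b a * ?s a"] by (simp add: links_commute mult.assoc)
  also have "(\<Sum>a\<in>E. \<Sum>b\<in>E. disj_ind a b * ?s b) = (\<Sum>a\<in>E. \<Sum>b\<in>E. disj_ind a b * ?s a)"
    using sym[of "\<lambda>a b. ?s a"] by simp
  finally show ?thesis
    by (simp add: algebra_simps)
qed

end

theorem theorem2p9:
  fixes V :: "'a set" and E :: "'a set set"
  assumes "simple_graph V E"
    and "girth E \<ge> 5"
  shows "real (num_matchings E 4) =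
     (let m = real (card E); M1 = M1_pow V E 2; F = M1_pow V E 3; M14 = M1_pow V E 4 in
        m ^ 4 / 24 + m ^ 3 / 4 + 19 / 24 * m ^ 2 - 11 / 4 * m + M1 ^ 2 / 8 + m * F / 3
        - m ^ 2 * M1 / 4 + m * M2 E + M14 / 4 - 2 * M2 E - 5 / 4 * m * M1 + 7 / 2 * M1
        - EM2 E - 3 / 2 * F)"
proof -
  interpret graph_girth_ge_5 V E
    by unfold_locales (rule assms)+
  \<comment> \<open>Rewritten by the unfolded evaluations, these become solved forms of the two linear equations.\<close>
  have "EM2 E = (2 * EM2 E) / 2" "real (num_matchings E 4) = (24 * real (num_matchings E 4)) / 24"
    by simp_all
  then show ?thesis
    unfolding num_matchings_def card_matchings_4_expanded EM2_eq sum_disj_ind sum_disj_ind_deg_sum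
      sum_disj_ind_deg_sum_sq sum_disj_ind_deg_sum_deg_sum sum_disj_ind_links
      sum_disj_ind_links_deg_sum Let_def
    by (simp add: field_simps power2_eq_square power3_eq_cube power4_eq_xxxx)
qed

end
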